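(* There is a function $\varepsilon(n)\to 0$ as $n\to\infty$ such that for every $n\ge 4$, the number of pairwise non-equivalent quadrilateral embeddings of $L_n$ (equivalently, embeddings of $K_n^3$ in surfaces of Euler genus $\frac{(n-2)(n+3)(n-4)}{12}$) is at most $2^{(\frac14+\varepsilon(n))\,n^3\log_2 n}$.
   Context: $K_n^3$ is the complete $3$-uniform hypergraph on $[n]$; an embedding of $K_n^3$ is a 2-cell embedding of its Levi graph $L_n$, the bipartite graph with vertex set $[n]\sqcup\binom{[n]}{3}$ in which $i$ is adjacent to triple $t$ iff $i\in t$. A quadrilateral embedding is a 2-cell embedding in which every face is bounded by a closed walk of length $4$. The Euler genus of the orientable surface of genus $h$ is $2h$ and of the non-orientable surface with $c$ crosscaps is $c$. Two embeddings $\phi_1,\phi_2$ in a surface $S$ are equivalent if $\phi_2=h\phi_1$ for a homeomorphism $h:S\to S$. *)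

theory Defs
  imports "HOL-Analysis.Analysis"
begin

text \<open>An embedding scheme is a pair (rho, lam): rho v is a cyclic permutation of the
  neighbourhood of v (identity elsewhere; identity for v outside V), and lam u v
  is the edge signature (True = negative / twisted edge), symmetric and False on non-edges.\<close>

definition nbrs :: "('v \<Rightarrow> 'v \<Rightarrow> bool) \<Rightarrow> 'v \<Rightarrow> 'v set" where
  "nbrs adj v = {w. adj v w}"

definition cyclic_perm_on :: "'v set \<Rightarrow> ('v \<Rightarrow> 'v) \<Rightarrow> bool" where
  "cyclic_perm_on N f \<longleftrightarrow> bij_betw f N N \<and> (\<forall>x. x \<notin> N \<longrightarrow> f x = x)
     \<and> (\<forall>x\<in>N. \<forall>y\<in>N. \<exists>k. (f ^^ k) x = y)"

definition schemes :: "'v set \<Rightarrow> ('v \<Rightarrow> 'v \<Rightarrow> bool)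
    \<Rightarrow> (('v \<Rightarrow> 'v \<Rightarrow> 'v) \<times> ('v \<Rightarrow> 'v \<Rightarrow> bool)) set" where
  "schemes V adj = {(rho, lam).
      (\<forall>v\<in>V. cyclic_perm_on (nbrs adj v) (rho v)) \<and> (\<forall>v. v \<notin> V \<longrightarrow> rho v = id)
    \<and> (\<forall>u v. lam u v = lam v u) \<and> (\<forall>u v. \<not> adj u v \<longrightarrow> \<not> lam u v)}"

definition rev_rot :: "'v set \<Rightarrow> ('v \<Rightarrow> 'v) \<Rightarrow> 'v \<Rightarrow> 'v" where
  "rev_rot N f = (\<lambda>x. if x \<in> N then inv_into N f x else x)"

text \<open>Face tracing: a state is a dart (u,v) together with the current sign s
  (True = negative). Faces correspond to the orbits of this permutation (each face to
  two mutually reverse orbits), and the length of a face equals the orbit size.\<close>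
definition face_step :: "('v \<Rightarrow> 'v \<Rightarrow> bool) \<Rightarrow> (('v \<Rightarrow> 'v \<Rightarrow> 'v) \<times> ('v \<Rightarrow> 'v \<Rightarrow> bool))
    \<Rightarrow> 'v \<times> 'v \<times> bool \<Rightarrow> 'v \<times> 'v \<times> bool" where
  "face_step adj sch st = (case sch of (rho, lam) \<Rightarrow> (case st of (u, v, s) \<Rightarrow>
     (let s' = (s \<noteq> lam u v) in
      (v, (if s' then rev_rot (nbrs adj v) (rho v) u else rho v u), s'))))"

definition quadrilateral :: "('v \<Rightarrow> 'v \<Rightarrow> bool) \<Rightarrow> (('v \<Rightarrow> 'v \<Rightarrow> 'v) \<times> ('v \<Rightarrow> 'v \<Rightarrow> bool)) \<Rightarrow> bool" where
  "quadrilateral adj sch \<longleftrightarrow> (\<forall>u v s. adj u v \<longrightarrow>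
      (face_step adj sch ^^ 4) (u, v, s) = (u, v, s) \<and> (face_step adj sch ^^ 2) (u, v, s) \<noteq> (u, v, s))"

definition switch :: "('v \<Rightarrow> 'v \<Rightarrow> bool) \<Rightarrow> 'v set \<Rightarrow> (('v \<Rightarrow> 'v \<Rightarrow> 'v) \<times> ('v \<Rightarrow> 'v \<Rightarrow> bool))
    \<Rightarrow> (('v \<Rightarrow> 'v \<Rightarrow> 'v) \<times> ('v \<Rightarrow> 'v \<Rightarrow> bool))" where
  "switch adj U sch = (case sch of (rho, lam) \<Rightarrow>
     ((\<lambda>v. if v \<in> U then rev_rot (nbrs adj v) (rho v) else rho v),
      (\<lambda>u v. adj u v \<and> (lam u v \<noteq> ((u \<in> U) \<noteq> (v \<in> U))))))"

text \<open>Equivalence of embeddings (= equivalence up to homeomorphism of the surface).\<close>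
definition emb_equiv :: "'v set \<Rightarrow> ('v \<Rightarrow> 'v \<Rightarrow> bool)
    \<Rightarrow> ((('v \<Rightarrow> 'v \<Rightarrow> 'v) \<times> ('v \<Rightarrow> 'v \<Rightarrow> bool)) \<times> (('v \<Rightarrow> 'v \<Rightarrow> 'v) \<times> ('v \<Rightarrow> 'v \<Rightarrow> bool))) set" where
  "emb_equiv V adj = {(a, b). a \<in> schemes V adj \<and> b \<in> schemes V adj \<and> (\<exists>U. U \<subseteq> V \<and> b = switch adj U a)}"

definition num_quad_embeddings :: "'v set \<Rightarrow> ('v \<Rightarrow> 'v \<Rightarrow> bool) \<Rightarrow> nat" where
  "num_quad_embeddings V adj =
     card ({sch \<in> schemes V adj. quadrilateral adj sch} // emb_equiv V adj)"

section \<open>The Levi graph L_n of the complete 3-uniform hypergraph on [n] = {1..n}\<close>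

definition triples :: "nat \<Rightarrow> nat set set" where
  "triples n = {t. t \<subseteq> {1..n} \<and> card t = 3}"

definition levi_V :: "nat \<Rightarrow> (nat + nat set) set" where
  "levi_V n = Inl ` {1..n} \<union> Inr ` triples n"

definition levi_adj :: "nat \<Rightarrow> (nat + nat set) \<Rightarrow> (nat + nat set) \<Rightarrow> bool" where
  "levi_adj n x y \<longleftrightarrow> (\<exists>i t. i \<in> {1..n} \<and> t \<in> triples n \<and> i \<in> t \<and>
       ((x = Inl i \<and> y = Inr t) \<or> (x = Inr t \<and> y = Inl i)))"

end

theory Submission
  imports Defs "HOL-Real_Asymp.Real_Asymp" "HOL-Combinatorics.Permutations"
begin

text \<open>Every face of a quadrilateral embedding of L_n has the form a, s, j, t with distinct points
  a, j and triples s, t containing both. Hence a pair {s, t} of triples that are consecutive in the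
  rotation at a point a is also consecutive in the rotation at a second point j, and s, t differ in
  a single element. The set E of all such pairs therefore has at most n (n-1 choose 2) / 2 \<le> n^3/4
  elements, taken from the at most 3 n^4 pairs of triples differing in one element, which leaves at
  most (12 e n)^(n^3/4) choices for E. Conversely, E determines the rotation at every point up to
  orientation, because a cyclic permutation of at least three elements is determined by its
  undirected cycle and one value. Orientations, rotations at the triples and edge signatures
  contribute only 2^O(n^3) further choices, and there are no more equivalence classes than
  embedding schemes.\<close>

type_synonym 'v scheme = "('v \<Rightarrow> 'v \<Rightarrow> 'v) \<times> ('v \<Rightarrow> 'v \<Rightarrow> bool)"
type_synonym levi_vertex = "nat + nat set"

section \<open>Cyclic permutations\<close>

lemma cyclic_perm_on_in: "cyclic_perm_on N f \<Longrightarrow> x \<in> N \<Longrightarrow> f x \<in> N"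
  unfolding cyclic_perm_on_def by (meson bij_betw_apply)

lemma cyclic_perm_on_funpow_in: "cyclic_perm_on N f \<Longrightarrow> x \<in> N \<Longrightarrow> (f ^^ k) x \<in> N"
  by (induction k) (auto simp: cyclic_perm_on_in)

lemma cyclic_perm_on_inj_on: "cyclic_perm_on N f \<Longrightarrow> inj_on f N"
  unfolding cyclic_perm_on_def bij_betw_def by blast

lemma cyclic_perm_on_permutes: "cyclic_perm_on N f \<Longrightarrow> f permutes N"
  unfolding cyclic_perm_on_def by (auto intro: bij_imp_permutes)

lemma cyclic_perm_on_period_two:
  assumes f: "cyclic_perm_on N f" and x: "x \<in> N" and period: "f (f x) = x"
  shows "N \<subseteq> {x, f x}"
proof
  fix y assume "y \<in> N"
  then obtain k where "(f ^^ k) x = y" using f x unfolding cyclic_perm_on_def by blast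
  moreover have "(f ^^ k) x \<in> {x, f x}" using period by (induction k) auto
  ultimately show "y \<in> {x, f x}" by simp
qed

lemma cyclic_perm_on_no_fixpoint:
  assumes f: "cyclic_perm_on N f" and N: "2 \<le> card N" and x: "x \<in> N"
  shows "f x \<noteq> x"
proof
  assume "f x = x"
  then have "card N \<le> card {x}" using cyclic_perm_on_period_two[OF f x] by (intro card_mono) auto
  with N show False by simp
qed

lemma cyclic_perm_on_no_2cycle:
  assumes f: "cyclic_perm_on N f" and N: "3 \<le> card N" and x: "x \<in> N"
  shows "f (f x) \<noteq> x"
proof
  assume "f (f x) = x"
  then have "card N \<le> card {x, f x}"
    using cyclic_perm_on_period_two[OF f x] by (intro card_mono) auto
  also have "\<dots> \<le> 2" by (simp add: card_insert_if)
  finally show False using N by simp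
qed

lemma rev_rot_inverse:
  assumes f: "cyclic_perm_on N f" and u: "u \<in> N"
  shows "rev_rot N f u \<in> N" and "f (rev_rot N f u) = u"
proof -
  have "f ` N = N" using f unfolding cyclic_perm_on_def bij_betw_def by blast
  then show "rev_rot N f u \<in> N" "f (rev_rot N f u) = u"
    using u unfolding rev_rot_def by (auto simp: inv_into_into f_inv_into_f)
qed

definition cycle_edges :: "'a set \<Rightarrow> ('a \<Rightarrow> 'a) \<Rightarrow> 'a set set" where
  "cycle_edges N f = (\<lambda>x. {x, f x}) ` N"

lemma cycle_edges_subset: "cyclic_perm_on N f \<Longrightarrow> e \<in> cycle_edges N f \<Longrightarrow> e \<subseteq> N"
  unfolding cycle_edges_def using cyclic_perm_on_in by fastforce

lemma card_cycle_edge: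
  "cyclic_perm_on N f \<Longrightarrow> 2 \<le> card N \<Longrightarrow> e \<in> cycle_edges N f \<Longrightarrow> card e = 2"
  unfolding cycle_edges_def using cyclic_perm_on_no_fixpoint by fastforce

lemma cyclic_perm_on_eqI:
  assumes f: "cyclic_perm_on N f" and g: "cyclic_perm_on N g" and N: "3 \<le> card N"
    and edges: "cycle_edges N f = cycle_edges N g" and x0: "x0 \<in> N" and fx0: "f x0 = g x0"
  shows "f = g"
proof -
  have step: "f (f y) = g (f y)" if y: "y \<in> N" and fy: "f y = g y" for y
  proof -
    have "{f y, f (f y)} \<in> cycle_edges N g"
      using edges cyclic_perm_on_in[OF f y] unfolding cycle_edges_def by blast
    then obtain w where w: "w \<in> N" "{f y, f (f y)} = {w, g w}" unfolding cycle_edges_def by blast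
    show ?thesis
    proof (cases "w = f y")
      case True
      then show ?thesis using w(2) by (auto simp: doubleton_eq_iff)
    next
      case False
      then have "g w = g y" "f (f y) = w" using w(2) fy by (auto simp: doubleton_eq_iff)
      then have "f (f y) = y" using inj_onD[OF cyclic_perm_on_inj_on[OF g]] w(1) y by metis
      with cyclic_perm_on_no_2cycle[OF f N y] show ?thesis by simp
    qed
  qed
  have orbit: "f ((f ^^ k) x0) = g ((f ^^ k) x0)" for k
  proof (induction k)
    case (Suc k)
    then show ?case using step[OF cyclic_perm_on_funpow_in[OF f x0]] by simp
  qed (simp add: fx0)
  show "f = g"
  proof
    fix x
    show "f x = g x"
    proof (cases "x \<in> N")
      case True
      then obtain k where "(f ^^ k) x0 = x" using f x0 unfolding cyclic_perm_on_def by blast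
      with orbit show ?thesis by blast
    next
      case False
      then show ?thesis using f g unfolding cyclic_perm_on_def by simp
    qed
  qed
qed

section \<open>Face tracing\<close>

lemma face_step_signature: "face_step adj (rho, lam) (u, v, lam u v) = (v, rho v u, False)"
  by (simp add: face_step_def)

lemma face_step_rotation_edge:
  assumes rot: "cyclic_perm_on (nbrs adj v) (rho v)" and deg: "2 \<le> card (nbrs adj v)"
    and u: "u \<in> nbrs adj v"
  obtains w s' where "face_step adj (rho, lam) (u, v, s) = (v, w, s')"
    "w \<in> nbrs adj v" "w \<noteq> u" "{u, w} \<in> cycle_edges (nbrs adj v) (rho v)"
proof -
  define s' where "s' = (s \<noteq> lam u v)"
  define w where "w = (if s' then rev_rot (nbrs adj v) (rho v) u else rho v u)"
  have "face_step adj (rho, lam) (u, v, s) = (v, w, s')"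
    by (simp add: face_step_def w_def s'_def Let_def)
  moreover have "w \<in> nbrs adj v \<and> w \<noteq> u \<and> {u, w} \<in> cycle_edges (nbrs adj v) (rho v)"
  proof (cases s')
    case True
    then have "w \<in> nbrs adj v" "rho v w = u"
      using rev_rot_inverse[OF rot u] by (simp_all add: w_def)
    moreover have "w \<noteq> u" using cyclic_perm_on_no_fixpoint[OF rot deg] calculation by metis
    moreover have "{u, w} = {w, rho v w}" using \<open>rho v w = u\<close> by auto
    ultimately show ?thesis unfolding cycle_edges_def by auto
  next
    case False
    then show ?thesis using cyclic_perm_on_in[OF rot u] cyclic_perm_on_no_fixpoint[OF rot deg u] u
      unfolding w_def cycle_edges_def by auto
  qed
  ultimately show thesis using that by blast
qed

text \<open>The face through the dart from x to a continues a, rho a x, z, x for some vertex z; reading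
  the rotation at z along this face shows that the pair {x, rho a x} is also consecutive at z.\<close>

lemma quadrilateral_rotation_edge_shared:
  assumes sch: "(rho, lam) \<in> schemes V adj" and quad: "quadrilateral adj (rho, lam)"
    and adj_sym: "symp adj" and nbrs_V: "\<And>v. nbrs adj v \<subseteq> V"
    and deg: "\<forall>v\<in>V. 2 \<le> card (nbrs adj v)"
    and x: "x \<in> nbrs adj a"
  obtains z where "z \<in> nbrs adj (rho a x)" "z \<noteq> a"
    "{x, rho a x} \<in> cycle_edges (nbrs adj z) (rho z)"
proof -
  define F where "F = face_step adj (rho, lam)"
  have rot: "cyclic_perm_on (nbrs adj v) (rho v)" if "v \<in> V" for v
    using sch that unfolding schemes_def by blast
  have nbrs_sym: "v \<in> nbrs adj w" if "w \<in> nbrs adj v" for v w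
    using adj_sym that unfolding nbrs_def by (blast dest: sympD)
  have in_V: "v \<in> V" if "w \<in> nbrs adj v" for v w
    using nbrs_V nbrs_sym[OF that] by blast
  define y where "y = rho a x"
  have y: "y \<in> nbrs adj a" unfolding y_def using cyclic_perm_on_in[OF rot[OF in_V[OF x]] x] .
  have step1: "F (x, a, lam x a) = (a, y, False)"
    unfolding F_def y_def by (rule face_step_signature)
  have y_V: "y \<in> V" using in_V[OF nbrs_sym[OF y]] .
  obtain z s2 where step2: "F (a, y, False) = (y, z, s2)" and z: "z \<in> nbrs adj y" "z \<noteq> a"
    using face_step_rotation_edge[of adj y rho, OF rot[OF y_V] deg[rule_format, OF y_V] nbrs_sym[OF y]]
    unfolding F_def by metis
  have z_V: "z \<in> V" using in_V[OF nbrs_sym[OF z(1)]] .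
  obtain w s3 where step3: "F (y, z, s2) = (z, w, s3)"
    and w: "{y, w} \<in> cycle_edges (nbrs adj z) (rho z)"
    using face_step_rotation_edge[of adj z rho, OF rot[OF z_V] deg[rule_format, OF z_V]
        nbrs_sym[OF z(1)]]
    unfolding F_def by metis
  have "(F ^^ 4) (x, a, lam x a) = (x, a, lam x a)"
    using quad nbrs_sym[OF x] unfolding quadrilateral_def F_def nbrs_def by blast
  moreover have "(F ^^ 4) (x, a, lam x a) = F (z, w, s3)"
    using step1 step2 step3 by (simp add: numeral_eq_Suc)
  moreover have "fst (F (z, w, s3)) = w"
    unfolding F_def by (simp add: face_step_def Let_def)
  ultimately have "w = x" by (metis fst_conv)
  then show thesis using that z w unfolding y_def by (simp add: insert_commute)
qed

lemma card_Int_less_if_ne: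
  assumes "finite s" "finite t" "card s = card t" "s \<noteq> t"
  shows "card (s \<inter> t) < card s"
proof (rule psubset_card_mono)
  show "s \<inter> t \<subset> s" using assms card_subset_eq[of t s] by blast
qed (use assms in simp)

lemma three_sets_exchange:
  assumes s: "card s = 3" and t: "card t = 3" and aj: "{a, j} \<subseteq> s \<inter> t" "a \<noteq> j"
  obtains b c where "b \<in> s" "c \<in> t" "t = insert c (s - {b})"
proof -
  have "card (s - {a, j}) = 1" "card (t - {a, j}) = 1"
    using s t aj by (simp_all add: card_Diff_subset card.infinite)
  then obtain b c where "s - {a, j} = {b}" "t - {a, j} = {c}" by (meson card_1_singletonE)
  then have "b \<in> s" "c \<in> t" "t = insert c (s - {b})" using aj by auto
  then show thesis by (rule that)
qed

section \<open>The Levi graph\<close>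

lemma finite_triples: "finite (triples n)"
  by (rule finite_subset[of _ "Pow {1..n}"]) (auto simp: triples_def)

lemma triplesD:
  assumes "t \<in> triples n" shows "t \<subseteq> {1..n}" "card t = 3" "finite t"
  using assms unfolding triples_def by (auto intro: finite_subset)

lemma card_triples: "card (triples n) = n choose 3"
  unfolding triples_def using n_subsets[of "{1..n}" 3] by simp

lemma card_triples_le: "card (triples n) \<le> n ^ 3"
  unfolding card_triples by (cases "3 \<le> n") (simp_all add: binomial_le_pow binomial_eq_0)

lemma Inr_in_levi_nbrs_Inl: "Inr t \<in> nbrs (levi_adj n) (Inl a) \<longleftrightarrow> t \<in> triples n \<and> a \<in> t"
  unfolding nbrs_def levi_adj_def triples_def by auto

lemma levi_nbrs_Inl: "nbrs (levi_adj n) (Inl a) = Inr ` {t \<in> triples n. a \<in> t}"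
proof (intro set_eqI)
  fix x :: levi_vertex
  show "x \<in> nbrs (levi_adj n) (Inl a) \<longleftrightarrow> x \<in> Inr ` {t \<in> triples n. a \<in> t}"
    by (cases x) (auto simp: Inr_in_levi_nbrs_Inl, auto simp: nbrs_def levi_adj_def)
qed

lemma levi_nbrs_Inr: "t \<in> triples n \<Longrightarrow> nbrs (levi_adj n) (Inr t) = Inl ` t"
  unfolding nbrs_def levi_adj_def triples_def by auto

lemma card_levi_nbrs_Inl:
  assumes a: "a \<in> {1..n}"
  shows "card (nbrs (levi_adj n) (Inl a)) = (n - 1) choose 2"
proof -
  have "bij_betw (insert a) {S. S \<subseteq> {1..n} - {a} \<and> card S = 2} {t \<in> triples n. a \<in> t}"
  proof (rule bij_betw_byWitness[where f' = "\<lambda>t. t - {a}"])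
    show "insert a ` {S. S \<subseteq> {1..n} - {a} \<and> card S = 2} \<subseteq> {t \<in> triples n. a \<in> t}"
    proof
      fix t assume "t \<in> insert a ` {S. S \<subseteq> {1..n} - {a} \<and> card S = 2}"
      then obtain S where S: "S \<subseteq> {1..n} - {a}" "card S = 2" "t = insert a S" by blast
      then have "finite S" by (intro card_ge_0_finite) simp
      with S a show "t \<in> {t \<in> triples n. a \<in> t}" by (auto simp: triples_def card_insert_if)
    qed
    show "(\<lambda>t. t - {a}) ` {t \<in> triples n. a \<in> t} \<subseteq> {S. S \<subseteq> {1..n} - {a} \<and> card S = 2}"
      by (auto simp: triples_def)
  qed auto
  then have "card {t \<in> triples n. a \<in> t} = card ({1..n} - {a}) choose 2"
    by (simp add: bij_betw_same_card[symmetric] n_subsets)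
  then show ?thesis using a by (simp add: levi_nbrs_Inl card_image)
qed

lemma card_levi_nbrs_Inl_le: "a \<in> {1..n} \<Longrightarrow> 2 * card (nbrs (levi_adj n) (Inl a)) \<le> n ^ 2"
  by (simp add: card_levi_nbrs_Inl choose_two power2_eq_square mult_le_mono)

lemma levi_degree_ge_3:
  assumes n: "4 \<le> n" and v: "v \<in> levi_V n"
  shows "3 \<le> card (nbrs (levi_adj n) v)"
proof -
  have "(3::nat) * 2 \<le> (n - 1) * (n - 1 - 1)" using n by (intro mult_le_mono) auto
  then have "3 \<le> (n - 1) * (n - 1 - 1) div 2" using div_le_mono[of "3 * 2" _ 2] by simp
  then have "3 \<le> card (nbrs (levi_adj n) (Inl a))" if "a \<in> {1..n}" for a
    using card_levi_nbrs_Inl[OF that] by (simp only: choose_two)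
  moreover have "card (nbrs (levi_adj n) (Inr t)) = 3" if "t \<in> triples n" for t
    using that triplesD by (simp add: levi_nbrs_Inr card_image)
  ultimately show ?thesis using v unfolding levi_V_def by fastforce
qed

lemma symp_levi_adj: "symp (levi_adj n)"
  unfolding levi_adj_def symp_def by blast

lemma levi_nbrs_subset: "nbrs (levi_adj n) v \<subseteq> levi_V n"
  unfolding nbrs_def levi_adj_def levi_V_def by blast

lemma finite_levi_nbrs: "finite (nbrs (levi_adj n) v)"
proof (rule finite_subset[OF levi_nbrs_subset])
  show "finite (levi_V n)" unfolding levi_V_def using finite_triples by simp
qed

lemma levi_edges_eq:
  "{(u, v). levi_adj n u v} = (\<Union>t\<in>triples n. Inl ` t \<times> {Inr t} \<union> {Inr t} \<times> Inl ` t)"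
proof (intro set_eqI iffI)
  fix p assume "p \<in> {(u, v). levi_adj n u v}"
  then show "p \<in> (\<Union>t\<in>triples n. Inl ` t \<times> {Inr t} \<union> {Inr t} \<times> Inl ` t)"
    unfolding levi_adj_def by blast
next
  fix p assume "p \<in> (\<Union>t\<in>triples n. Inl ` t \<times> {Inr t} \<union> {Inr t} \<times> Inl ` t)"
  then obtain t i where "t \<in> triples n" "i \<in> t" "p = (Inl i, Inr t) \<or> p = (Inr t, Inl i)" by blast
  moreover have "i \<in> {1..n}" using triplesD(1) calculation(1,2) by blast
  ultimately show "p \<in> {(u, v). levi_adj n u v}" unfolding levi_adj_def by blast
qed

lemma finite_levi_edges: "finite {(u, v). levi_adj n u v}"
  unfolding levi_edges_eq by (rule finite_UN_I[OF finite_triples]) (simp add: triplesD(3))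

lemma card_levi_edges_le: "card {(u, v). levi_adj n u v} \<le> 6 * n ^ 3"
proof -
  have "card {(u, v). levi_adj n u v}
      \<le> (\<Sum>t\<in>triples n. card (Inl ` t \<times> {Inr t} \<union> {Inr t} \<times> Inl ` t))"
    unfolding levi_edges_eq by (rule card_UN_le[OF finite_triples])
  also have "\<dots> \<le> (\<Sum>t\<in>triples n. 6)"
  proof (rule sum_mono)
    fix t assume t: "t \<in> triples n"
    have "card (Inl ` t \<times> {Inr t} :: (levi_vertex \<times> levi_vertex) set) = 3"
      "card ({Inr t} \<times> Inl ` t :: (levi_vertex \<times> levi_vertex) set) = 3"
      using triplesD(2)[OF t] by (simp_all add: card_cartesian_product card_image)
    then show "card (Inl ` t \<times> {Inr t} \<union> {Inr t} \<times> Inl ` t) \<le> 6"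
      using card_Un_le[of "Inl ` t \<times> {Inr t}" "{Inr t} \<times> Inl ` t"] by simp
  qed
  also have "\<dots> \<le> 6 * n ^ 3" using card_triples_le by simp
  finally show ?thesis .
qed

section \<open>Rotation pairs of quadrilateral embeddings of the Levi graph\<close>

definition quad_schemes :: "nat \<Rightarrow> levi_vertex scheme set" where
  "quad_schemes n = {sch \<in> schemes (levi_V n) (levi_adj n). quadrilateral (levi_adj n) sch}"

abbreviation point_cycle_edges
    :: "nat \<Rightarrow> (levi_vertex \<Rightarrow> levi_vertex \<Rightarrow> levi_vertex) \<Rightarrow> nat \<Rightarrow> levi_vertex set set" where
  "point_cycle_edges n rho a \<equiv> cycle_edges (nbrs (levi_adj n) (Inl a)) (rho (Inl a))"

definition all_point_cycle_edges
    :: "nat \<Rightarrow> (levi_vertex \<Rightarrow> levi_vertex \<Rightarrow> levi_vertex) \<Rightarrow> levi_vertex set set" where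
  "all_point_cycle_edges n rho = (\<Union>a\<in>{1..n}. point_cycle_edges n rho a)"

lemma Inl_in_levi_V: "a \<in> {1..n} \<Longrightarrow> Inl a \<in> levi_V n"
  unfolding levi_V_def by blast

lemma quad_schemes_rotation:
  "(rho, lam) \<in> quad_schemes n \<Longrightarrow> v \<in> levi_V n
    \<Longrightarrow> cyclic_perm_on (nbrs (levi_adj n) v) (rho v)"
  unfolding quad_schemes_def schemes_def by blast

lemma point_cycle_edge_triples:
  assumes n: "4 \<le> n" and sch: "(rho, lam) \<in> quad_schemes n" and a: "a \<in> {1..n}"
    and e: "e \<in> point_cycle_edges n rho a"
  obtains s t where "e = {Inr s, Inr t}" "s \<noteq> t" "s \<in> triples n" "t \<in> triples n"
proof -
  have rot: "cyclic_perm_on (nbrs (levi_adj n) (Inl a)) (rho (Inl a))"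
    using quad_schemes_rotation[OF sch Inl_in_levi_V[OF a]] .
  have "2 \<le> card (nbrs (levi_adj n) (Inl a))"
    using levi_degree_ge_3[OF n Inl_in_levi_V[OF a]] by simp
  then obtain x y where xy: "e = {x, y}" "x \<noteq> y"
    using card_cycle_edge[OF rot _ e] by (meson card_2_iff)
  moreover have "x \<in> nbrs (levi_adj n) (Inl a)" "y \<in> nbrs (levi_adj n) (Inl a)"
    using cycle_edges_subset[OF rot e] xy by auto
  ultimately show thesis using that unfolding levi_nbrs_Inl by blast
qed

lemma pair_subset_levi_nbrs_Inl:
  "{Inr s, Inr t} \<subseteq> nbrs (levi_adj n) (Inl a)
    \<longleftrightarrow> s \<in> triples n \<and> t \<in> triples n \<and> a \<in> s \<inter> t"
  using Inr_in_levi_nbrs_Inl by auto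

lemma point_cycle_edge_subset:
  "(rho, lam) \<in> quad_schemes n \<Longrightarrow> a \<in> {1..n} \<Longrightarrow> e \<in> point_cycle_edges n rho a
    \<Longrightarrow> e \<subseteq> nbrs (levi_adj n) (Inl a)"
  using cycle_edges_subset quad_schemes_rotation Inl_in_levi_V by blast

lemma point_cycle_edge_shared:
  assumes n: "4 \<le> n" and sch: "(rho, lam) \<in> quad_schemes n" and a: "a \<in> {1..n}"
    and e: "e \<in> point_cycle_edges n rho a"
  obtains j where "j \<in> {1..n}" "j \<noteq> a" "e \<in> point_cycle_edges n rho j"
proof -
  obtain x where x: "x \<in> nbrs (levi_adj n) (Inl a)" and ex: "e = {x, rho (Inl a) x}"
    using e unfolding cycle_edges_def by blast
  have scheme: "(rho, lam) \<in> schemes (levi_V n) (levi_adj n)"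
    and quad: "quadrilateral (levi_adj n) (rho, lam)"
    using sch unfolding quad_schemes_def by auto
  have deg: "\<forall>v\<in>levi_V n. 2 \<le> card (nbrs (levi_adj n) v)"
    using levi_degree_ge_3[OF n] by fastforce
  obtain z where z: "z \<in> nbrs (levi_adj n) (rho (Inl a) x)" "z \<noteq> Inl a"
    and shared: "e \<in> cycle_edges (nbrs (levi_adj n) z) (rho z)"
    using quadrilateral_rotation_edge_shared[OF scheme quad symp_levi_adj levi_nbrs_subset deg x] ex
    by metis
  have "rho (Inl a) x \<in> nbrs (levi_adj n) (Inl a)"
    using cyclic_perm_on_in[OF quad_schemes_rotation[OF sch Inl_in_levi_V[OF a]] x] .
  then obtain t where t: "rho (Inl a) x = Inr t" "t \<in> triples n"
    unfolding levi_nbrs_Inl by blast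
  then obtain j where j: "z = Inl j" "j \<in> t"
    using z(1) levi_nbrs_Inr by auto
  then have "j \<in> {1..n}" "j \<noteq> a" using triplesD(1)[OF t(2)] z(2) by auto
  then show thesis using that shared j(1) by blast
qed

text \<open>A pair of distinct triples that is consecutive at two points b and j has no third common
  point, so it lies in the neighbourhood of a only if a is b or j.\<close>

lemma point_cycle_edges_eq:
  assumes n: "4 \<le> n" and sch: "(rho, lam) \<in> quad_schemes n" and a: "a \<in> {1..n}"
  shows "point_cycle_edges n rho a
    = {e \<in> all_point_cycle_edges n rho. e \<subseteq> nbrs (levi_adj n) (Inl a)}"
proof (intro set_eqI iffI)
  fix e assume "e \<in> point_cycle_edges n rho a"
  then show "e \<in> {e \<in> all_point_cycle_edges n rho. e \<subseteq> nbrs (levi_adj n) (Inl a)}"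
    using a point_cycle_edge_subset[OF sch a] unfolding all_point_cycle_edges_def by blast
next
  fix e assume "e \<in> {e \<in> all_point_cycle_edges n rho. e \<subseteq> nbrs (levi_adj n) (Inl a)}"
  then obtain b where b: "b \<in> {1..n}" "e \<in> point_cycle_edges n rho b"
    and e_a: "e \<subseteq> nbrs (levi_adj n) (Inl a)"
    unfolding all_point_cycle_edges_def by blast
  obtain j where j: "j \<in> {1..n}" "j \<noteq> b" "e \<in> point_cycle_edges n rho j"
    using point_cycle_edge_shared[OF n sch b] by blast
  obtain s t where st: "e = {Inr s, Inr t}" "s \<noteq> t" "s \<in> triples n" "t \<in> triples n"
    using point_cycle_edge_triples[OF n sch b] by blast
  have "{a, b, j} \<subseteq> s \<inter> t"
    using e_a point_cycle_edge_subset[OF sch b(1) b(2)] point_cycle_edge_subset[OF sch j(1) j(3)]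
    unfolding st(1) pair_subset_levi_nbrs_Inl by blast
  moreover have "card (s \<inter> t) < 3"
    using card_Int_less_if_ne[of s t] triplesD[OF st(3)] triplesD[OF st(4)] st(2) by simp
  ultimately have "card {a, b, j} < 3"
    using triplesD(3)[OF st(3)] by (meson card_mono finite_Int le_less_trans)
  then have "a = b \<or> a = j" using j(2) by (auto simp: card_insert_if split: if_splits)
  then show "e \<in> point_cycle_edges n rho a" using b(2) j(3) by blast
qed

lemma card_all_point_cycle_edges:
  assumes n: "4 \<le> n" and sch: "(rho, lam) \<in> quad_schemes n"
  shows "4 * card (all_point_cycle_edges n rho) \<le> n ^ 3"
proof -
  define E where "E = all_point_cycle_edges n rho"
  have finite_E: "finite E"
    unfolding E_def all_point_cycle_edges_def cycle_edges_def using finite_levi_nbrs by simp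
  have "(\<Sum>a\<in>{1..n}. card (point_cycle_edges n rho a))
      = (\<Sum>a\<in>{1..n}. card {e \<in> E. e \<in> point_cycle_edges n rho a})"
    unfolding E_def all_point_cycle_edges_def
    by (intro sum.cong refl arg_cong[where f = card]) auto
  also have "\<dots> = (\<Sum>e\<in>E. card {a \<in> {1..n}. e \<in> point_cycle_edges n rho a})"
    by (rule sum_multicount_gen) (auto simp: finite_E)
  also have "\<dots> \<ge> (\<Sum>e\<in>E. 2)"
  proof (rule sum_mono)
    fix e assume "e \<in> E"
    then obtain b where b: "b \<in> {1..n}" "e \<in> point_cycle_edges n rho b"
      unfolding E_def all_point_cycle_edges_def by blast
    obtain j where "j \<in> {1..n}" "j \<noteq> b" "e \<in> point_cycle_edges n rho j"
      using point_cycle_edge_shared[OF n sch b] by blast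
    then have "card {b, j} \<le> card {a \<in> {1..n}. e \<in> point_cycle_edges n rho a}"
      using b by (intro card_mono) auto
    then show "2 \<le> card {a \<in> {1..n}. e \<in> point_cycle_edges n rho a}"
      using \<open>j \<noteq> b\<close> by simp
  qed
  finally have "4 * card E \<le> 2 * (\<Sum>a\<in>{1..n}. card (point_cycle_edges n rho a))"
    by simp
  also have "\<dots> = (\<Sum>a\<in>{1..n}. 2 * card (point_cycle_edges n rho a))"
    by (simp add: sum_distrib_left)
  also have "\<dots> \<le> (\<Sum>a\<in>{1..n}. n ^ 2)"
  proof (rule sum_mono)
    fix a assume a: "a \<in> {1..n}"
    have "card (point_cycle_edges n rho a) \<le> card (nbrs (levi_adj n) (Inl a))"
      unfolding cycle_edges_def by (rule card_image_le[OF finite_levi_nbrs])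
    then show "2 * card (point_cycle_edges n rho a) \<le> n ^ 2"
      using card_levi_nbrs_Inl_le[OF a] by linarith
  qed
  also have "\<dots> = n ^ 3" by (simp add: power_numeral_reduce)
  finally show ?thesis unfolding E_def .
qed

definition triple_swaps :: "nat \<Rightarrow> levi_vertex set set" where
  "triple_swaps n = (\<lambda>((t, b), c). {Inr t, Inr (insert c (t - {b}))})
     ` ((SIGMA t:triples n. t) \<times> {1..n})"

lemma finite_triple_swaps: "finite (triple_swaps n)"
  unfolding triple_swaps_def using finite_triples triplesD(3)
  by (intro finite_imageI finite_cartesian_product finite_SigmaI) auto

lemma card_triple_swaps_le: "card (triple_swaps n) \<le> 3 * n ^ 4"
proof -
  have "card (SIGMA t:triples n. t) = (\<Sum>t\<in>triples n. card t)"
    by (rule card_SigmaI) (auto simp: finite_triples triplesD(3))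
  also have "\<dots> = 3 * card (triples n)" by (simp add: triplesD(2))
  finally have "card (SIGMA t:triples n. t) \<le> 3 * n ^ 3" using card_triples_le by simp
  then have "card ((SIGMA t:triples n. t) \<times> {1..n}) \<le> 3 * n ^ 3 * n"
    by (simp add: card_cartesian_product)
  moreover have "card (triple_swaps n) \<le> card ((SIGMA t:triples n. t) \<times> {1..n})"
    unfolding triple_swaps_def by (rule card_image_le)
      (use finite_triples triplesD(3) in \<open>auto intro: finite_cartesian_product finite_SigmaI\<close>)
  ultimately show ?thesis by (simp add: power_numeral_reduce)
qed

lemma all_point_cycle_edges_subset:
  assumes n: "4 \<le> n" and sch: "(rho, lam) \<in> quad_schemes n"
  shows "all_point_cycle_edges n rho \<subseteq> triple_swaps n"
proof
  fix e assume "e \<in> all_point_cycle_edges n rho"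
  then obtain a where a: "a \<in> {1..n}" "e \<in> point_cycle_edges n rho a"
    unfolding all_point_cycle_edges_def by blast
  obtain j where j: "j \<in> {1..n}" "j \<noteq> a" "e \<in> point_cycle_edges n rho j"
    using point_cycle_edge_shared[OF n sch a] by blast
  obtain s t where st: "e = {Inr s, Inr t}" "s \<in> triples n" "t \<in> triples n"
    using point_cycle_edge_triples[OF n sch a] by blast
  have "{a, j} \<subseteq> s \<inter> t"
    using point_cycle_edge_subset[OF sch a] point_cycle_edge_subset[OF sch j(1) j(3)]
    unfolding st(1) pair_subset_levi_nbrs_Inl by blast
  moreover have "a \<noteq> j" using j(2) by simp
  ultimately obtain b c where bc: "b \<in> s" "c \<in> t" "t = insert c (s - {b})"
    using three_sets_exchange[OF triplesD(2)[OF st(2)] triplesD(2)[OF st(3)]] by blast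
  have "((s, b), c) \<in> (SIGMA t:triples n. t) \<times> {1..n}"
    using st(2) bc(1) bc(2) triplesD(1)[OF st(3)] by blast
  then show "e \<in> triple_swaps n"
    unfolding triple_swaps_def st(1) bc(3) by (rule rev_image_eqI) simp
qed

lemma exp_ge_partial_sum: "0 \<le> x \<Longrightarrow> (\<Sum>k<m. x ^ k / fact k) \<le> exp (x::real)"
proof -
  assume x: "0 \<le> x"
  obtain t where "exp x = (\<Sum>k<m. x ^ k / fact k) + exp t / fact m * x ^ m"
    using Maclaurin_exp_le[of x m] by blast
  moreover have "0 \<le> exp t / fact m * x ^ m" using x by simp
  ultimately show ?thesis by linarith
qed

lemma card_subsets_card_le:
  assumes U: "finite U" "real (card U) \<le> u" and y: "0 < y" "y \<le> u" and m: "real m \<le> y"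
  shows "real (card {E. E \<subseteq> U \<and> card E \<le> m}) \<le> (exp 1 * (u / y)) powr y"
proof -
  have "{E. E \<subseteq> U \<and> card E \<le> m} = (\<Union>k\<in>{..m}. {E. E \<subseteq> U \<and> card E = k})" by auto
  then have "card {E. E \<subseteq> U \<and> card E \<le> m} \<le> (\<Sum>k\<le>m. card {E. E \<subseteq> U \<and> card E = k})"
    using U(1) by (simp add: card_UN_le)
  also have "\<dots> = (\<Sum>k\<le>m. card U choose k)" using n_subsets[OF U(1)] by simp
  finally have "real (card {E. E \<subseteq> U \<and> card E \<le> m}) \<le> (\<Sum>k\<le>m. real (card U choose k))"
    by (metis of_nat_le_iff of_nat_sum)
  also have "\<dots> \<le> (\<Sum>k\<le>m. (u / y) powr y * (y ^ k / fact k))"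
  proof (rule sum_mono)
    fix k assume k: "k \<in> {..m}"
    have "real (card U choose k) * fact k \<le> real (card U) ^ k"
      using binomial_fact_pow[of "card U" k]
      by (metis of_nat_fact of_nat_le_iff of_nat_mult of_nat_power)
    then have "real (card U choose k) \<le> real (card U) ^ k / fact k"
      by (simp add: field_simps)
    also have "\<dots> \<le> u ^ k / fact k"
      by (intro divide_right_mono power_mono U(2)) simp_all
    also have "u ^ k = (u / y) ^ k * y ^ k" using y by (simp add: power_divide)
    also have "(u / y) ^ k = (u / y) powr real k" using y by (simp add: powr_realpow)
    also have "\<dots> \<le> (u / y) powr y" using k m y by (intro powr_mono) auto
    finally show "real (card U choose k) \<le> (u / y) powr y * (y ^ k / fact k)"
      using y by (simp add: divide_right_mono mult_right_mono)
  qed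
  also have "\<dots> = (u / y) powr y * (\<Sum>k<Suc m. y ^ k / fact k)"
    by (simp add: sum_distrib_left lessThan_Suc_atMost)
  also have "\<dots> \<le> (u / y) powr y * exp y"
    using y exp_ge_partial_sum[of y "Suc m"] by (intro mult_left_mono) auto
  also have "\<dots> = (exp 1 * (u / y)) powr y"
    using y powr_mult[of "exp 1" "u / y" y] by (simp add: exp_powr_real mult.commute)
  finally show ?thesis .
qed

lemma powr_eq_2_powr:
  assumes "0 < x" shows "x powr y = 2 powr (y * log 2 x)"
proof -
  have "2 powr (y * log 2 x) = (2 powr log 2 x) powr y" by (simp add: powr_powr mult.commute)
  then show ?thesis using assms by simp
qed

section \<open>Encoding quadrilateral embeddings\<close>

definition base_triple :: "nat \<Rightarrow> nat \<Rightarrow> levi_vertex" where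
  "base_triple n a = (SOME x. x \<in> nbrs (levi_adj n) (Inl a))"

lemma base_triple_in:
  "4 \<le> n \<Longrightarrow> a \<in> {1..n} \<Longrightarrow> base_triple n a \<in> nbrs (levi_adj n) (Inl a)"
  using levi_degree_ge_3[OF _ Inl_in_levi_V] unfolding base_triple_def
  by (metis all_not_in_conv card.empty not_numeral_le_zero someI_ex)

lemma point_rotation_eqI:
  assumes n: "4 \<le> n" and sch: "(rho, lam) \<in> quad_schemes n" and sch': "(rho', lam') \<in> quad_schemes n"
    and a: "a \<in> {1..n}" and E: "all_point_cycle_edges n rho = all_point_cycle_edges n rho'"
    and base: "rho (Inl a) (base_triple n a) = rho' (Inl a) (base_triple n a)"
  shows "rho (Inl a) = rho' (Inl a)"
proof (rule cyclic_perm_on_eqI)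
  show "cyclic_perm_on (nbrs (levi_adj n) (Inl a)) (rho (Inl a))"
    "cyclic_perm_on (nbrs (levi_adj n) (Inl a)) (rho' (Inl a))"
    using quad_schemes_rotation[OF sch] quad_schemes_rotation[OF sch'] Inl_in_levi_V[OF a] by auto
  show "point_cycle_edges n rho a = point_cycle_edges n rho' a"
    using point_cycle_edges_eq[OF n sch a] point_cycle_edges_eq[OF n sch' a] E by simp
qed (use levi_degree_ge_3[OF n Inl_in_levi_V[OF a]] base_triple_in[OF n a] base in auto)

definition encode :: "nat \<Rightarrow> levi_vertex scheme \<Rightarrow> levi_vertex set set \<times> (nat \<Rightarrow> levi_vertex)
    \<times> (levi_vertex \<Rightarrow> levi_vertex \<Rightarrow> levi_vertex) \<times> (levi_vertex \<times> levi_vertex) set" where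
  "encode n sch = (case sch of (rho, lam) \<Rightarrow>
     (all_point_cycle_edges n rho, \<lambda>a\<in>{1..n}. rho (Inl a) (base_triple n a),
      \<lambda>v\<in>Inr ` triples n. rho v, {(u, v). lam u v}))"

definition codes :: "nat \<Rightarrow> (levi_vertex set set \<times> (nat \<Rightarrow> levi_vertex)
    \<times> (levi_vertex \<Rightarrow> levi_vertex \<Rightarrow> levi_vertex) \<times> (levi_vertex \<times> levi_vertex) set) set" where
  "codes n = {E. E \<subseteq> triple_swaps n \<and> card E \<le> n ^ 3 div 4}
     \<times> (\<Pi>\<^sub>E a\<in>{1..n}. nbrs (levi_adj n) (Inl a))
     \<times> (\<Pi>\<^sub>E v\<in>Inr ` triples n. {f. f permutes nbrs (levi_adj n) v})
     \<times> Pow {(u, v). levi_adj n u v}"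

lemma inj_on_encode:
  assumes n: "4 \<le> n"
  shows "inj_on (encode n) (quad_schemes n)"
proof (rule inj_onI, clarify)
  fix rho lam rho' lam'
  assume sch: "(rho, lam) \<in> quad_schemes n" and sch': "(rho', lam') \<in> quad_schemes n"
    and "encode n (rho, lam) = encode n (rho', lam')"
  then have E: "all_point_cycle_edges n rho = all_point_cycle_edges n rho'"
    and base_restrict: "(\<lambda>a\<in>{1..n}. rho (Inl a) (base_triple n a))
      = (\<lambda>a\<in>{1..n}. rho' (Inl a) (base_triple n a))"
    and triples_restrict: "(\<lambda>v\<in>Inr ` triples n. rho v) = (\<lambda>v\<in>Inr ` triples n. rho' v)"
    and sig: "{(u, v). lam u v} = {(u, v). lam' u v}"
    unfolding encode_def by auto
  have base: "rho (Inl a) (base_triple n a) = rho' (Inl a) (base_triple n a)"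
    if "a \<in> {1..n}" for a
    using fun_cong[OF base_restrict, of a] that by simp
  have at_triples: "rho v = rho' v" if "v \<in> Inr ` triples n" for v
    using fun_cong[OF triples_restrict, of v] that by simp
  have "rho v = rho' v" for v
  proof (cases "v \<in> levi_V n")
    case False
    then show ?thesis using sch sch' unfolding quad_schemes_def schemes_def by auto
  next
    case True
    then consider a where "a \<in> {1..n}" "v = Inl a" | "v \<in> Inr ` triples n"
      unfolding levi_V_def by blast
    then show ?thesis
    proof cases
      case 1
      then show ?thesis using point_rotation_eqI[OF n sch sch' 1(1) E base[OF 1(1)]] by simp
    qed (rule at_triples)
  qed
  moreover have "lam = lam'"
    using sig by (intro ext) (metis case_prod_conv mem_Collect_eq)
  ultimately show "rho = rho' \<and> lam = lam'" by blast
qed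

lemma encode_in_codes:
  assumes n: "4 \<le> n"
  shows "encode n ` quad_schemes n \<subseteq> codes n"
proof (rule image_subsetI)
  fix sch assume "sch \<in> quad_schemes n"
  moreover obtain rho lam where rho_lam: "sch = (rho, lam)" by fastforce
  ultimately have sch: "(rho, lam) \<in> quad_schemes n" by simp
  have "card (all_point_cycle_edges n rho) \<le> n ^ 3 div 4"
    using card_all_point_cycle_edges[OF n sch] by (simp add: less_eq_div_iff_mult_less_eq)
  moreover have "rho (Inl a) (base_triple n a) \<in> nbrs (levi_adj n) (Inl a)"
    if "a \<in> {1..n}" for a
    using cyclic_perm_on_in[OF quad_schemes_rotation[OF sch Inl_in_levi_V[OF that]]
        base_triple_in[OF n that]] .
  moreover have "rho v permutes nbrs (levi_adj n) v" if "v \<in> Inr ` triples n" for v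
    using that by (intro cyclic_perm_on_permutes quad_schemes_rotation[OF sch])
      (auto simp: levi_V_def)
  moreover have "{(u, v). lam u v} \<subseteq> {(u, v). levi_adj n u v}"
    using sch unfolding quad_schemes_def schemes_def by blast
  ultimately show "encode n sch \<in> codes n"
    using all_point_cycle_edges_subset[OF n sch] unfolding rho_lam encode_def codes_def by auto
qed

lemma finite_codes: "finite (codes n)"
  unfolding codes_def using finite_triple_swaps finite_triples finite_levi_nbrs finite_levi_edges
  by (intro finite_cartesian_product finite_PiE finite_imageI)
    (auto intro: finite_permutations)

lemma card_small_triple_swap_sets_le:
  assumes n: "4 \<le> n"
  shows "real (card {E. E \<subseteq> triple_swaps n \<and> card E \<le> n ^ 3 div 4})
    \<le> 2 powr (real n ^ 3 / 4 * log 2 (12 * exp 1 * real n))"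
proof -
  have n0: "0 < real n" using n by simp
  have "real (card {E. E \<subseteq> triple_swaps n \<and> card E \<le> n ^ 3 div 4})
      \<le> (exp 1 * (3 * real n ^ 4 / (real n ^ 3 / 4))) powr (real n ^ 3 / 4)"
  proof (rule card_subsets_card_le[OF finite_triple_swaps])
    show "real (card (triple_swaps n)) \<le> 3 * real n ^ 4"
      using card_triple_swaps_le[of n]
      by (metis of_nat_le_iff of_nat_mult of_nat_numeral of_nat_power)
    show "real n ^ 3 / 4 \<le> 3 * real n ^ 4"
      using n0 by (simp add: power_numeral_reduce field_simps mult_le_cancel_left1)
    have "real (4 * (n ^ 3 div 4)) \<le> real (n ^ 3)" by (simp only: of_nat_le_iff)
    then show "real (n ^ 3 div 4) \<le> real n ^ 3 / 4" by simp
  qed (use n0 in simp)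
  also have "exp 1 * (3 * real n ^ 4 / (real n ^ 3 / 4)) = 12 * exp 1 * real n"
    using n0 by (simp add: power_numeral_reduce field_simps)
  also have "(12 * exp 1 * real n) powr (real n ^ 3 / 4)
      = 2 powr (real n ^ 3 / 4 * log 2 (12 * exp 1 * real n))"
    using n0 by (intro powr_eq_2_powr) simp
  finally show ?thesis .
qed

lemma card_point_orientations_le:
  assumes n: "4 \<le> n"
  shows "real (card (\<Pi>\<^sub>E a\<in>{1..n}. nbrs (levi_adj n) (Inl a)))
    \<le> 2 powr (2 * real n * log 2 (real n))"
proof -
  have "card (\<Pi>\<^sub>E a\<in>{1..n}. nbrs (levi_adj n) (Inl a))
      = (\<Prod>a\<in>{1..n}. card (nbrs (levi_adj n) (Inl a)))"
    by (simp add: card_PiE)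
  also have "\<dots> \<le> (n ^ 2) ^ n"
  proof (rule prod_le_power)
    fix a assume "a \<in> {1..n}"
    then show "0 \<le> card (nbrs (levi_adj n) (Inl a)) \<and> card (nbrs (levi_adj n) (Inl a)) \<le> n ^ 2"
      using card_levi_nbrs_Inl_le[of a n] by simp
  qed (use n in simp_all)
  finally have "real (card (\<Pi>\<^sub>E a\<in>{1..n}. nbrs (levi_adj n) (Inl a))) \<le> real n ^ (2 * n)"
    by (metis of_nat_le_iff of_nat_power power_mult)
  also have "\<dots> = real n powr (2 * real n)"
    using n powr_realpow[of "real n" "2 * n"] by simp
  also have "\<dots> = 2 powr (2 * real n * log 2 (real n))"
    using n by (intro powr_eq_2_powr) simp
  finally show ?thesis .
qed

lemma card_triple_rotations_le:
  "real (card (\<Pi>\<^sub>E v\<in>Inr ` triples n. {f. f permutes nbrs (levi_adj n) v}))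
    \<le> 2 powr (real n ^ 3 * log 2 6)"
proof -
  have "card (\<Pi>\<^sub>E v\<in>Inr ` triples n. {f. f permutes nbrs (levi_adj n) v})
      = (\<Prod>v\<in>Inr ` triples n. card {f. f permutes nbrs (levi_adj n) v})"
    using finite_triples by (simp add: card_PiE)
  also have "\<dots> = (\<Prod>v\<in>(Inr ` triples n :: levi_vertex set). fact 3)"
  proof (rule prod.cong[OF refl])
    fix v :: levi_vertex assume "v \<in> Inr ` triples n"
    then obtain t where "t \<in> triples n" "v = Inr t" by blast
    then have "card (nbrs (levi_adj n) v) = 3" by (simp add: levi_nbrs_Inr card_image triplesD(2))
    then show "card {f. f permutes nbrs (levi_adj n) v} = fact 3"
      by (rule card_permutations[OF _ finite_levi_nbrs])
  qed
  also have "\<dots> \<le> 6 ^ n ^ 3"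
    using card_triples_le[of n] by (simp add: card_image fact_numeral power_increasing)
  finally have "real (card (\<Pi>\<^sub>E v\<in>Inr ` triples n. {f. f permutes nbrs (levi_adj n) v}))
      \<le> 6 ^ n ^ 3"
    by (metis of_nat_le_iff of_nat_numeral of_nat_power)
  also have "\<dots> = 6 powr (real n ^ 3)"
    using powr_realpow[of 6 "n ^ 3"] by simp
  also have "\<dots> = 2 powr (real n ^ 3 * log 2 6)"
    by (rule powr_eq_2_powr) simp
  finally show ?thesis .
qed

lemma card_signatures_le: "real (card (Pow {(u, v). levi_adj n u v})) \<le> 2 powr (6 * real n ^ 3)"
proof -
  have "card (Pow {(u, v). levi_adj n u v}) \<le> 2 ^ (6 * n ^ 3)"
    using card_levi_edges_le[of n] by (simp add: card_Pow finite_levi_edges power_increasing)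
  then have "real (card (Pow {(u, v). levi_adj n u v})) \<le> 2 ^ (6 * n ^ 3)"
    by (metis of_nat_le_iff of_nat_numeral of_nat_power)
  also have "\<dots> = 2 powr (6 * real n ^ 3)"
    using powr_realpow[of 2 "6 * n ^ 3"] by simp
  finally show ?thesis .
qed

lemma card_codes_le:
  assumes n: "4 \<le> n"
  shows "real (card (codes n)) \<le> 2 powr (real n ^ 3 / 4 * log 2 (12 * exp 1 * real n)
    + 2 * real n * log 2 (real n) + real n ^ 3 * log 2 6 + 6 * real n ^ 3)"
proof -
  have "real (card (codes n))
      = real (card {E. E \<subseteq> triple_swaps n \<and> card E \<le> n ^ 3 div 4})
      * real (card (\<Pi>\<^sub>E a\<in>{1..n}. nbrs (levi_adj n) (Inl a)))
      * real (card (\<Pi>\<^sub>E v\<in>Inr ` triples n. {f. f permutes nbrs (levi_adj n) v}))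
      * real (card (Pow {(u, v). levi_adj n u v}))"
    unfolding codes_def by (simp add: card_cartesian_product)
  also have "\<dots> \<le> 2 powr (real n ^ 3 / 4 * log 2 (12 * exp 1 * real n))
      * 2 powr (2 * real n * log 2 (real n)) * 2 powr (real n ^ 3 * log 2 6)
      * 2 powr (6 * real n ^ 3)"
    using card_small_triple_swap_sets_le[OF n] card_point_orientations_le[OF n]
      card_triple_rotations_le card_signatures_le
    by (intro mult_mono) auto
  finally show ?thesis by (simp add: powr_add)
qed

lemma card_quotient_le: "finite A \<Longrightarrow> card (A // r) \<le> card A"
  unfolding quotient_def by (metis UNION_singleton_eq_range card_image_le)

lemma num_quad_embeddings_levi_le:
  assumes n: "4 \<le> n"
  shows "num_quad_embeddings (levi_V n) (levi_adj n) \<le> card (codes n)"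
proof -
  have "finite (quad_schemes n)"
    using inj_on_finite[OF inj_on_encode[OF n] encode_in_codes[OF n] finite_codes] .
  then have "num_quad_embeddings (levi_V n) (levi_adj n) \<le> card (quad_schemes n)"
    unfolding num_quad_embeddings_def quad_schemes_def[symmetric] by (rule card_quotient_le)
  also have "\<dots> \<le> card (codes n)"
    using card_inj_on_le[OF inj_on_encode[OF n] encode_in_codes[OF n] finite_codes] .
  finally show ?thesis .
qed

theorem lemma4p1:
  shows "\<exists>eps :: nat \<Rightarrow> real. eps \<longlonglongrightarrow> 0 \<and>
    (\<forall>n::nat. n \<ge> 4 \<longrightarrow>
       real (num_quad_embeddings (levi_V n) (levi_adj n))
         \<le> 2 powr ((1/4 + eps n) * real n ^ 3 * log 2 (real n)))"
proof -
  define L where "L n = real n ^ 3 / 4 * log 2 (12 * exp 1 * real n)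
    + 2 * real n * log 2 (real n) + real n ^ 3 * log 2 6 + 6 * real n ^ 3" for n :: nat
  define eps where "eps n = L n / (real n ^ 3 * log 2 (real n)) - 1/4" for n :: nat
  have "eps \<longlonglongrightarrow> 0" unfolding eps_def L_def by real_asymp
  moreover have "real (num_quad_embeddings (levi_V n) (levi_adj n))
      \<le> 2 powr ((1/4 + eps n) * real n ^ 3 * log 2 (real n))" if n: "4 \<le> n" for n
  proof -
    have "0 < log 2 (real n)" using n by simp
    then have "log 2 (real n) \<noteq> 0" by linarith
    then have L: "(1/4 + eps n) * real n ^ 3 * log 2 (real n) = L n"
      unfolding eps_def using n by (simp add: mult.assoc)
    have "real (num_quad_embeddings (levi_V n) (levi_adj n)) \<le> real (card (codes n))"
      using num_quad_embeddings_levi_le[OF n] by simp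
    also have "\<dots> \<le> 2 powr L n"
      unfolding L_def by (rule card_codes_le[OF n])
    finally show ?thesis unfolding L .
  qed
  ultimately show ?thesis by blast
qed

end
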